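(* Let $\mathcal W$ be the even part of $W(m,n;\underline t)$ over a field of characteristic $p>3$, $m,n\ge3$. If $q>1$ is an integer that is not a power of $p$, then $\mathrm{Der}_{-q}(\mathcal W)=0$.
   Context: $\mathbb F$ is a field of characteristic $p>3$; $m,n\ge 3$; $\underline t=(t_1,\dots,t_m)$ positive integers, $\pi_i=p^{t_i}-1$. $Y_0=\{1,\dots,m\}$, $Y_1=\{m+1,\dots,m+n\}$, $Y=Y_0\cup Y_1$, $\tau(r)=\bar0$ on $Y_0$, $\bar1$ on $Y_1$. $\mathfrak A=\mathfrak A(m,n;\underline t)$ is the supercommutative superalgebra with basis $x^{(\alpha)}x^u$ ($\alpha\in\mathbb N_0^m$, $\alpha_i\le\pi_i$; $u$ an increasing sequence in $Y_1$, $x^u$ the product of odd generators $x_k$, $k\in u$), divided-power multiplication (zero if some index exceeds $\pi_i$), anticommuting $x_k$, parity $|u|\bmod 2$. $D_i$ ($i\in Y_0$) sends $x^{(\alpha)}x^u\mapsto x^{(\alpha-\varepsilon_i)}x^u$, $D_k$ ($k\in Y_1$) is the odd partial derivative $\partial/\partial x_k$. $W=\{\sum_{r\in Y}f_rD_r:f_r\in\mathfrak A\}$ with bracket $[fD_r,gD_s]=fD_r(g)D_s-(-1)^{\mathrm p(fD_r)\mathrm p(gD_s)}gD_s(f)D_r$; $x^{(\alpha)}x^uD_r$ has parity $|u|+\tau(r)$ and $\mathbb Z$-degree $|\alpha|+|u|-1$. $\mathcal W=W_{\bar0}=\bigoplus_{i\ge-1}\mathcal W_i$ with the induced $\mathbb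 Z$-grading. $\mathrm{Der}_{-q}(\mathcal W)$ is the space of derivations $D$ of $\mathcal W$ with $D(\mathcal W_i)\subset\mathcal W_{i-q}$ for all $i$. *)

theory Defs
  imports Main "HOL-Computational_Algebra.Primes"
begin

text \<open>Monomials x^(alpha) x^u: alpha is a multi-index (zero outside Y0), u a finite
 subset of Y1 (= an increasing sequence in Y1).\<close>
type_synonym mono = "(nat \<Rightarrow> nat) \<times> nat set"

definition Y0 :: "nat \<Rightarrow> nat set" where "Y0 m = {1..m}"
definition Y1 :: "nat \<Rightarrow> nat \<Rightarrow> nat set" where "Y1 m n = {m+1..m+n}"
definition Y :: "nat \<Rightarrow> nat \<Rightarrow> nat set" where "Y m n = Y0 m \<union> Y1 m n"

definition tau :: "nat \<Rightarrow> nat \<Rightarrow> nat" where "tau m r = (if r \<in> Y0 m then 0 else 1)"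

text \<open>The basis of the divided power superalgebra A(m,n;t), pi_i = p^(t_i) - 1.\<close>
definition basisA :: "nat \<Rightarrow> nat \<Rightarrow> nat \<Rightarrow> (nat \<Rightarrow> nat) \<Rightarrow> mono set" where
  "basisA p m n t = {(\<alpha>, u). (\<forall>i. i \<notin> Y0 m \<longrightarrow> \<alpha> i = 0) \<and>
       (\<forall>i\<in>Y0 m. \<alpha> i \<le> p ^ t i - 1) \<and> u \<subseteq> Y1 m n}"

definition carrierA :: "nat \<Rightarrow> nat \<Rightarrow> nat \<Rightarrow> (nat \<Rightarrow> nat) \<Rightarrow> (mono \<Rightarrow> 'a::field) set" where
  "carrierA p m n t = {f. \<forall>a. f a \<noteq> 0 \<longrightarrow> a \<in> basisA p m n t}"

text \<open>Number of inversions: x^u x^v = (-1)^(inv u v) x^(u \<union> v) for disjoint u, v.\<close>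
definition inv_count :: "nat set \<Rightarrow> nat set \<Rightarrow> nat" where
  "inv_count u v = card {(i, j). i \<in> u \<and> j \<in> v \<and> j < i}"

text \<open>Multiplication in A: divided powers (zero when some index exceeds pi_i),
 anticommuting odd generators.\<close>
definition multA :: "nat \<Rightarrow> nat \<Rightarrow> nat \<Rightarrow> (nat \<Rightarrow> nat) \<Rightarrow>
    (mono \<Rightarrow> 'a::field) \<Rightarrow> (mono \<Rightarrow> 'a) \<Rightarrow> mono \<Rightarrow> 'a" where
  "multA p m n t f g = (\<lambda>(\<gamma>, w). if (\<gamma>, w) \<in> basisA p m n t then
     (\<Sum>(\<alpha>, u)\<in>basisA p m n t. \<Sum>(\<beta>, v)\<in>basisA p m n t.
        if (\<forall>i. \<gamma> i = \<alpha> i + \<beta> i) \<and> u \<inter> v = {} \<and> w = u \<union> v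
        then f (\<alpha>, u) * g (\<beta>, v) * of_nat (\<Prod>i\<in>Y0 m. (\<alpha> i + \<beta> i) choose \<alpha> i)
             * (- 1) ^ inv_count u v
        else 0)
     else 0)"

text \<open>The partial derivatives D_r on A (D_i for i in Y0: lowers alpha_i;
 D_k for k in Y1: the odd left derivative d/dx_k).\<close>
definition derA :: "nat \<Rightarrow> nat \<Rightarrow> nat \<Rightarrow> (nat \<Rightarrow> nat) \<Rightarrow> nat \<Rightarrow>
    (mono \<Rightarrow> 'a::field) \<Rightarrow> mono \<Rightarrow> 'a" where
  "derA p m n t r f = (\<lambda>(\<gamma>, w). if (\<gamma>, w) \<in> basisA p m n t then
     (if r \<in> Y0 m then f (\<gamma>(r := \<gamma> r + 1), w)
      else if r \<in> Y1 m n \<and> r \<notin> w then (- 1) ^ card {j \<in> w. j < r} * f (\<gamma>, insert r w)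
      else 0)
     else 0)"

text \<open>Elements of W are families (f_r)_{r in Y} standing for sum_r f_r D_r.
 The even part: coefficient of x^(alpha) x^u D_r nonzero only if |u| + tau(r) is even.\<close>
type_synonym 'a wel = "nat \<Rightarrow> mono \<Rightarrow> 'a"

definition Wev :: "nat \<Rightarrow> nat \<Rightarrow> nat \<Rightarrow> (nat \<Rightarrow> nat) \<Rightarrow> ('a::field) wel set" where
  "Wev p m n t = {X. (\<forall>r a. X r a \<noteq> 0 \<longrightarrow>
       r \<in> Y m n \<and> a \<in> basisA p m n t \<and> even (card (snd a) + tau m r))}"

text \<open>Action of sum_r f_r D_r on A, and the bracket on the even part
 (all summands f_r D_r are even there, so no signs occur):
 [X, Y] = sum_s (X(g_s) - Y(f_s)) D_s.\<close>
definition actW :: "nat \<Rightarrow> nat \<Rightarrow> nat \<Rightarrow> (nat \<Rightarrow> nat) \<Rightarrow>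
    ('a::field) wel \<Rightarrow> (mono \<Rightarrow> 'a) \<Rightarrow> mono \<Rightarrow> 'a" where
  "actW p m n t X g = (\<lambda>a. \<Sum>r\<in>Y m n. multA p m n t (X r) (derA p m n t r g) a)"

definition brW :: "nat \<Rightarrow> nat \<Rightarrow> nat \<Rightarrow> (nat \<Rightarrow> nat) \<Rightarrow>
    ('a::field) wel \<Rightarrow> 'a wel \<Rightarrow> 'a wel" where
  "brW p m n t X Z = (\<lambda>s a. actW p m n t X (Z s) a - actW p m n t Z (X s) a)"

text \<open>Z-degree of x^(alpha) x^u D_r is |alpha| + |u| - 1; homogeneous component W_i
 (which is 0 for i < -1).\<close>
definition Wdeg :: "nat \<Rightarrow> nat \<Rightarrow> nat \<Rightarrow> (nat \<Rightarrow> nat) \<Rightarrow> int \<Rightarrow> ('a::field) wel set" where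
  "Wdeg p m n t i = {X \<in> Wev p m n t. \<forall>r a. X r a \<noteq> 0 \<longrightarrow>
       int (\<Sum>j\<in>Y0 m. fst a j) + int (card (snd a)) - 1 = i}"

definition is_derivation :: "nat \<Rightarrow> nat \<Rightarrow> nat \<Rightarrow> (nat \<Rightarrow> nat) \<Rightarrow>
    (('a::field) wel \<Rightarrow> 'a wel) \<Rightarrow> bool" where
  "is_derivation p m n t D \<longleftrightarrow>
     (\<forall>X\<in>Wev p m n t. D X \<in> Wev p m n t) \<and>
     (\<forall>X\<in>Wev p m n t. \<forall>Z\<in>Wev p m n t. D (\<lambda>r a. X r a + Z r a) = (\<lambda>r a. D X r a + D Z r a)) \<and>
     (\<forall>c. \<forall>X\<in>Wev p m n t. D (\<lambda>r a. c * X r a) = (\<lambda>r a. c * D X r a)) \<and>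
     (\<forall>X\<in>Wev p m n t. \<forall>Z\<in>Wev p m n t.
        D (brW p m n t X Z) = (\<lambda>r a. brW p m n t (D X) Z r a + brW p m n t X (D Z) r a))"

definition Der_deg :: "nat \<Rightarrow> nat \<Rightarrow> nat \<Rightarrow> (nat \<Rightarrow> nat) \<Rightarrow> int \<Rightarrow>
    (('a::field) wel \<Rightarrow> 'a wel) set" where
  "Der_deg p m n t k = {D. is_derivation p m n t D \<and>
     (\<forall>i. \<forall>X\<in>Wdeg p m n t i. D X \<in> Wdeg p m n t (i + k))}"

end

theory Submission
  imports Defs "HOL-Library.FuncSet" "HOL-Computational_Algebra.Polynomial" "HOL-Number_Theory.Cong"
begin

text \<open>
  A derivation \<open>D\<close> of degree \<open>-q < -1\<close> annihilates every homogeneous component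
  \<open>W_j\<close> with \<open>j < q - 1\<close>, in particular \<open>W_-1\<close> and \<open>W_0\<close>, and therefore commutes
  with the adjoint action of their elements. We show \<open>D (x^\<alpha> x^u D_r) = 0\<close> by
  induction on \<open>|\<alpha>| + |u|\<close>. Commuting with \<open>ad D_i\<close> (\<open>i \<in> Y0\<close>) and the induction
  hypothesis show that \<open>D (x^\<alpha> x^u D_r)\<close> involves no even variables; commuting with
  the torus elements \<open>x_k D_k\<close> shows that it has the same weights as \<open>x^\<alpha> x^u D_r\<close>.
  Together with the degree this forces \<open>q = 0\<close> in the field and congruences mod \<open>p\<close>
  on \<open>\<alpha>\<close>. As \<open>q\<close> is not a power of \<open>p\<close>, some \<open>q choose b\<close> with \<open>0 < b < q\<close> is
  prime to \<open>p\<close>, and a case analysis yields \<open>l \<in> Y0\<close> and \<open>2 \<le> b < q\<close> with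
  \<open>[x^(b e_l) D_l, x^(\<alpha> - (b - 1) e_l) x^u D_r] = c x^\<alpha> x^u D_r\<close> for some \<open>c \<noteq> 0\<close>.
  The left-hand side is killed by \<open>D\<close>, since its first factor has degree \<open>b - 1 < q - 1\<close>
  and its second factor has smaller total degree.
\<close>

lemma sum_eq_single:
  assumes "finite S" "x \<in> S" "\<And>y. y \<in> S \<Longrightarrow> y \<noteq> x \<Longrightarrow> f y = 0"
  shows "sum f S = f x"
  using assms by (subst sum.mono_neutral_right[of S "{x}"]) auto

lemma prod_eq_single:
  assumes "finite S" "x \<in> S" "\<And>y. y \<in> S \<Longrightarrow> y \<noteq> x \<Longrightarrow> f y = 1"
  shows "prod f S = f x"
  using assms by (subst prod.mono_neutral_right[of S "{x}"]) auto

lemma sum_indicator_eq_card: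
  assumes "finite A" "v \<subseteq> A"
  shows "(\<Sum>k\<in>A. if k \<in> v then 1 else 0) = (card v :: nat)"
proof -
  have "(\<Sum>k\<in>A. if k \<in> v then 1 else (0::nat)) = card (A \<inter> v)"
    using assms(1) by (simp add: sum.If_cases Int_def)
  then show ?thesis using assms(2) by (simp add: Int_absorb1)
qed

section \<open>Monomials of the divided power algebra\<close>

lemma finite_Y0: "finite (Y0 m)"
  by (simp add: Y0_def)

lemma finite_Y1: "finite (Y1 m n)"
  by (simp add: Y1_def)

lemma finite_Y: "finite (Y m n)"
  by (simp add: Y_def finite_Y0 finite_Y1)

lemma Y0_subset_Y: "Y0 m \<subseteq> Y m n" and Y1_subset_Y: "Y1 m n \<subseteq> Y m n"
  by (auto simp: Y_def)

lemma Y1_not_Y0: "i \<in> Y1 m n \<Longrightarrow> i \<notin> Y0 m"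
  by (simp add: Y0_def Y1_def)

lemma Y_not_Y0_iff: "i \<in> Y m n \<Longrightarrow> i \<notin> Y0 m \<longleftrightarrow> i \<in> Y1 m n"
  by (auto simp: Y_def Y0_def Y1_def)

lemma tau_Y0: "i \<in> Y0 m \<Longrightarrow> tau m i = 0"
  by (simp add: tau_def)

lemma tau_Y1: "i \<in> Y1 m n \<Longrightarrow> tau m i = 1"
  by (simp add: tau_def Y1_not_Y0)

definition monA :: "mono \<Rightarrow> mono \<Rightarrow> 'a::field" where
  "monA a = (\<lambda>b. if b = a then 1 else 0)"

definition single_exp :: "nat \<Rightarrow> nat \<Rightarrow> nat \<Rightarrow> nat" where
  "single_exp l b = (\<lambda>i. if i = l then b else 0)"

lemma single_exp_zero [simp]: "single_exp l 0 = (\<lambda>_. 0)"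
  by (simp add: single_exp_def fun_eq_iff)

lemma finite_basisA: "finite (basisA p m n t)"
proof -
  let ?ext = "\<lambda>f i. if i \<in> Y0 m then f i else 0"
  have "basisA p m n t \<subseteq> (?ext ` PiE (Y0 m) (\<lambda>i. {..p ^ t i - 1})) \<times> Pow (Y1 m n)"
  proof
    fix x assume "x \<in> basisA p m n t"
    then obtain \<alpha> u where x: "x = (\<alpha>, u)" and \<alpha>: "\<forall>i. i \<notin> Y0 m \<longrightarrow> \<alpha> i = 0"
      "\<forall>i\<in>Y0 m. \<alpha> i \<le> p ^ t i - 1" and u: "u \<subseteq> Y1 m n"
      unfolding basisA_def by auto
    have "\<alpha> = ?ext (restrict \<alpha> (Y0 m))" using \<alpha> by auto
    moreover have "restrict \<alpha> (Y0 m) \<in> PiE (Y0 m) (\<lambda>i. {..p ^ t i - 1})" using \<alpha> by auto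
    ultimately show "x \<in> (?ext ` PiE (Y0 m) (\<lambda>i. {..p ^ t i - 1})) \<times> Pow (Y1 m n)"
      using x u by blast
  qed
  moreover have "finite (PiE (Y0 m) (\<lambda>i. {..p ^ t i - 1}))"
    by (simp add: finite_PiE finite_Y0)
  ultimately show ?thesis
    by (meson finite_SigmaI finite_imageI finite_subset finite_Pow_iff finite_Y1)
qed

lemma basisA_downward_closed:
  assumes "(\<gamma>, w) \<in> basisA p m n t" "\<And>i. \<beta> i \<le> \<gamma> i" "v \<subseteq> w"
  shows "(\<beta>, v) \<in> basisA p m n t"
proof -
  have "\<forall>i. i \<notin> Y0 m \<longrightarrow> \<gamma> i = 0" "\<forall>i\<in>Y0 m. \<gamma> i \<le> p ^ t i - 1" "w \<subseteq> Y1 m n"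
    using assms(1) unfolding basisA_def by auto
  then show ?thesis
    using assms(2,3) unfolding basisA_def by (auto intro: le_trans) (metis le_zero_eq, meson le_trans)
qed

lemma zero_in_basisA: "((\<lambda>_. 0), {}) \<in> basisA p m n t"
  unfolding basisA_def by auto

lemma derA_in_carrierA: "derA p m n t r f \<in> carrierA p m n t"
  unfolding derA_def carrierA_def by auto

lemma multA_zero_left: "multA p m n t (\<lambda>_. 0) g = (\<lambda>_. 0)"
  unfolding multA_def by (auto intro!: ext sum.neutral)

lemma multA_zero_right: "multA p m n t f (\<lambda>_. 0) = (\<lambda>_. 0)"
  unfolding multA_def by (auto intro!: ext sum.neutral)

lemma derA_zero: "derA p m n t r (\<lambda>_. 0) = (\<lambda>_. 0)"
  unfolding derA_def by (auto intro!: ext)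

lemma inv_count_empty [simp]: "inv_count u {} = 0" "inv_count {} u = 0"
  unfolding inv_count_def by auto

lemma inv_count_singleton: "inv_count {k} v = card {j \<in> v. j < k}"
proof -
  have "{(i, j). i \<in> {k} \<and> j \<in> v \<and> j < i} = Pair k ` {j \<in> v. j < k}" by auto
  then show ?thesis unfolding inv_count_def by (simp add: card_image inj_on_def)
qed

lemma multA_monA_left:
  assumes a0: "(\<alpha>0, u0) \<in> basisA p m n t"
  shows "multA p m n t (monA (\<alpha>0, u0)) g (\<gamma>, w) =
    (if (\<gamma>, w) \<in> basisA p m n t \<and> (\<forall>i. \<alpha>0 i \<le> \<gamma> i) \<and> u0 \<subseteq> w
     then of_nat (\<Prod>i\<in>Y0 m. \<gamma> i choose \<alpha>0 i) * (-1) ^ inv_count u0 (w - u0) * g (\<lambda>i. \<gamma> i - \<alpha>0 i, w - u0)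
     else 0)"
proof (cases "(\<gamma>, w) \<in> basisA p m n t")
  case False
  then show ?thesis unfolding multA_def by simp
next
  case True
  let ?B = "basisA p m n t"
  let ?C = "\<lambda>\<alpha> u \<beta> v. (\<forall>i. \<gamma> i = \<alpha> i + \<beta> i) \<and> u \<inter> v = {} \<and> w = u \<union> v"
  let ?T = "\<lambda>\<alpha> u \<beta> v. if ?C \<alpha> u \<beta> v
        then g (\<beta>, v) * of_nat (\<Prod>i\<in>Y0 m. (\<alpha> i + \<beta> i) choose \<alpha> i) * (- 1) ^ inv_count u v else 0"
  have "multA p m n t (monA (\<alpha>0, u0)) g (\<gamma>, w) =
      (\<Sum>a\<in>?B. monA (\<alpha>0, u0) a * (case a of (\<alpha>, u) \<Rightarrow> \<Sum>(\<beta>, v)\<in>?B. ?T \<alpha> u \<beta> v))"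
    using True unfolding multA_def
    by (auto intro!: sum.cong simp: sum_distrib_left mult.assoc)
  also have "\<dots> = (\<Sum>(\<beta>, v)\<in>?B. ?T \<alpha>0 u0 \<beta> v)"
    by (subst sum_eq_single[OF finite_basisA a0]) (simp_all add: monA_def)
  also have "\<dots> = (if (\<forall>i. \<alpha>0 i \<le> \<gamma> i) \<and> u0 \<subseteq> w
     then of_nat (\<Prod>i\<in>Y0 m. \<gamma> i choose \<alpha>0 i) * (-1) ^ inv_count u0 (w - u0) * g (\<lambda>i. \<gamma> i - \<alpha>0 i, w - u0)
     else 0)"
  proof (cases "(\<forall>i. \<alpha>0 i \<le> \<gamma> i) \<and> u0 \<subseteq> w")
    case le: True
    let ?b0 = "(\<lambda>i. \<gamma> i - \<alpha>0 i, w - u0)"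
    have b0: "?b0 \<in> ?B" using basisA_downward_closed[OF True] by auto
    have "?C \<alpha>0 u0 \<beta> v \<longleftrightarrow> (\<beta>, v) = ?b0" for \<beta> v
      using le by (auto simp: fun_eq_iff)
    then have "(\<Sum>(\<beta>, v)\<in>?B. ?T \<alpha>0 u0 \<beta> v) = (case ?b0 of (\<beta>, v) \<Rightarrow> ?T \<alpha>0 u0 \<beta> v)"
      by (intro sum_eq_single[OF finite_basisA b0]) (auto split: if_split_asm)
    then show ?thesis using le by (simp add: Un_absorb1 le_add_diff_inverse mult_ac)
  next
    case False
    then have "?T \<alpha>0 u0 \<beta> v = 0" for \<beta> v by auto
    then show ?thesis unfolding if_not_P[OF False] by (intro sum.neutral) auto
  qed
  finally show ?thesis using True by simp
qed

lemma multA_monA_right: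
  assumes b0: "(\<beta>0, v0) \<in> basisA p m n t"
  shows "multA p m n t f (monA (\<beta>0, v0)) (\<gamma>, w) =
    (if (\<gamma>, w) \<in> basisA p m n t \<and> (\<forall>i. \<beta>0 i \<le> \<gamma> i) \<and> v0 \<subseteq> w
     then of_nat (\<Prod>i\<in>Y0 m. \<gamma> i choose (\<gamma> i - \<beta>0 i)) * (-1) ^ inv_count (w - v0) v0 * f (\<lambda>i. \<gamma> i - \<beta>0 i, w - v0)
     else 0)"
proof (cases "(\<gamma>, w) \<in> basisA p m n t")
  case False
  then show ?thesis unfolding multA_def by simp
next
  case True
  let ?B = "basisA p m n t"
  let ?C = "\<lambda>\<alpha> u \<beta> v. (\<forall>i. \<gamma> i = \<alpha> i + \<beta> i) \<and> u \<inter> v = {} \<and> w = u \<union> v"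
  let ?T = "\<lambda>\<alpha> u \<beta> v. if ?C \<alpha> u \<beta> v
        then f (\<alpha>, u) * of_nat (\<Prod>i\<in>Y0 m. (\<alpha> i + \<beta> i) choose \<alpha> i) * (- 1) ^ inv_count u v else 0"
  have "multA p m n t f (monA (\<beta>0, v0)) (\<gamma>, w) =
      (\<Sum>(\<alpha>, u)\<in>?B. \<Sum>b\<in>?B. monA (\<beta>0, v0) b * (case b of (\<beta>, v) \<Rightarrow> ?T \<alpha> u \<beta> v))"
    using True unfolding multA_def
    by (auto intro!: sum.cong simp: mult_ac)
  also have "\<dots> = (\<Sum>(\<alpha>, u)\<in>?B. ?T \<alpha> u \<beta>0 v0)"
    by (intro sum.cong refl, subst sum_eq_single[OF finite_basisA b0]) (auto simp: monA_def)
  also have "\<dots> = (if (\<forall>i. \<beta>0 i \<le> \<gamma> i) \<and> v0 \<subseteq> w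
     then of_nat (\<Prod>i\<in>Y0 m. \<gamma> i choose (\<gamma> i - \<beta>0 i)) * (-1) ^ inv_count (w - v0) v0 * f (\<lambda>i. \<gamma> i - \<beta>0 i, w - v0)
     else 0)"
  proof (cases "(\<forall>i. \<beta>0 i \<le> \<gamma> i) \<and> v0 \<subseteq> w")
    case le: True
    let ?a0 = "(\<lambda>i. \<gamma> i - \<beta>0 i, w - v0)"
    have a0: "?a0 \<in> ?B" using basisA_downward_closed[OF True] by auto
    have "?C \<alpha> u \<beta>0 v0 \<longleftrightarrow> (\<alpha>, u) = ?a0" for \<alpha> u
      using le by (auto simp: fun_eq_iff)
    then have "(\<Sum>(\<alpha>, u)\<in>?B. ?T \<alpha> u \<beta>0 v0) = (case ?a0 of (\<alpha>, u) \<Rightarrow> ?T \<alpha> u \<beta>0 v0)"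
      by (intro sum_eq_single[OF finite_basisA a0]) (auto split: if_split_asm)
    moreover have "(w - v0) \<inter> v0 = {}" by blast
    ultimately show ?thesis using le by (simp add: Un_absorb2 mult_ac)
  next
    case False
    then have "?T \<alpha> u \<beta>0 v0 = 0" for \<alpha> u by auto
    then show ?thesis unfolding if_not_P[OF False] by (intro sum.neutral) auto
  qed
  finally show ?thesis using True by simp
qed

lemma multA_one_left:
  assumes "g \<in> carrierA p m n t"
  shows "multA p m n t (monA ((\<lambda>_. 0), {})) g = g"
proof
  fix x :: mono
  show "multA p m n t (monA ((\<lambda>_. 0), {})) g x = g x"
    using assms by (cases x) (auto simp: multA_monA_left[OF zero_in_basisA] carrierA_def)
qed

lemma multA_one_right:
  assumes "f \<in> carrierA p m n t"
  shows "multA p m n t f (monA ((\<lambda>_. 0), {})) = f"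
proof
  fix x :: mono
  show "multA p m n t f (monA ((\<lambda>_. 0), {})) x = f x"
    using assms by (cases x) (auto simp: multA_monA_right[OF zero_in_basisA] carrierA_def)
qed

lemma multA_monA_monA:
  assumes a: "(\<alpha>, u) \<in> basisA p m n t" and uv: "u \<inter> v = {}"
    and ab: "(\<lambda>i. \<alpha> i + \<beta> i, u \<union> v) \<in> basisA p m n t"
  shows "multA p m n t (monA (\<alpha>, u)) (monA (\<beta>, v)) =
    (\<lambda>x. of_nat (\<Prod>i\<in>Y0 m. (\<alpha> i + \<beta> i) choose \<alpha> i) * (-1) ^ inv_count u v
       * monA (\<lambda>i. \<alpha> i + \<beta> i, u \<union> v) x)"
proof
  fix x :: mono
  obtain \<gamma> w where x: "x = (\<gamma>, w)" by (cases x)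
  have quotient: "(\<lambda>i. \<gamma> i - \<alpha> i, w - u) = (\<beta>, v) \<longleftrightarrow> (\<gamma>, w) = (\<lambda>i. \<alpha> i + \<beta> i, u \<union> v)"
    if "\<forall>i. \<alpha> i \<le> \<gamma> i" "u \<subseteq> w"
    using that uv by (auto simp: fun_eq_iff) (metis add_diff_inverse_nat not_le)
  show "multA p m n t (monA (\<alpha>, u)) (monA (\<beta>, v)) x =
      of_nat (\<Prod>i\<in>Y0 m. (\<alpha> i + \<beta> i) choose \<alpha> i) * (-1) ^ inv_count u v
       * monA (\<lambda>i. \<alpha> i + \<beta> i, u \<union> v) x"
    unfolding x multA_monA_left[OF a] using ab uv quotient
    by (auto simp: monA_def Un_Diff Diff_triv Int_commute)
qed

lemma multA_single_exp_left:
  assumes l: "l \<in> Y0 m" and a: "(\<alpha>, u) \<in> basisA p m n t" and b: "b \<le> \<alpha> l"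
  shows "multA p m n t (monA (single_exp l b, {})) (monA (\<alpha>(l := \<alpha> l - b), u)) =
    (\<lambda>x. of_nat (\<alpha> l choose b) * monA (\<alpha>, u) x)"
proof -
  have sum: "single_exp l b i + (\<alpha>(l := \<alpha> l - b)) i = \<alpha> i" for i
    using b by (auto simp: single_exp_def)
  have e: "(single_exp l b, {}) \<in> basisA p m n t"
    by (rule basisA_downward_closed[OF a]) (auto simp: single_exp_def b)
  have choose: "(\<Prod>i\<in>Y0 m. \<alpha> i choose single_exp l b i) = \<alpha> l choose b"
    by (subst prod_eq_single[OF finite_Y0 l]) (auto simp: single_exp_def)
  show ?thesis
    using multA_monA_monA[OF e Int_empty_left, of "\<alpha>(l := \<alpha> l - b)" u] a
    by (simp only: sum choose inv_count_empty power_0 mult_1_right Un_empty_left True_implies_equals)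
qed

lemma multA_single_exp_right:
  assumes l: "l \<in> Y0 m" and a: "(\<alpha>, u) \<in> basisA p m n t" and b: "b \<le> \<alpha> l"
  shows "multA p m n t (monA (\<alpha>(l := \<alpha> l - b), u)) (monA (single_exp l b, {})) =
    (\<lambda>x. of_nat (\<alpha> l choose b) * monA (\<alpha>, u) x)"
proof -
  have sum: "(\<alpha>(l := \<alpha> l - b)) i + single_exp l b i = \<alpha> i" for i
    using b by (auto simp: single_exp_def)
  have a': "(\<alpha>(l := \<alpha> l - b), u) \<in> basisA p m n t"
    by (rule basisA_downward_closed[OF a]) auto
  have choose: "(\<Prod>i\<in>Y0 m. \<alpha> i choose (\<alpha>(l := \<alpha> l - b)) i) = \<alpha> l choose b"
    by (subst prod_eq_single[OF finite_Y0 l]) (auto simp: binomial_symmetric[OF b, symmetric])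
  show ?thesis
    using multA_monA_monA[OF a' Int_empty_right, of "single_exp l b"] a
    by (simp only: sum choose inv_count_empty power_0 mult_1_right Un_empty_right True_implies_equals)
qed

lemma derA_monA_Y0:
  assumes i: "i \<in> Y0 m" and b: "(\<beta>, u) \<in> basisA p m n t"
  shows "derA p m n t i (monA (\<beta>, u)) =
    (if 1 \<le> \<beta> i then monA (\<beta>(i := \<beta> i - 1), u) else (\<lambda>_. 0))"
proof
  fix x :: mono
  obtain \<gamma> w where x: "x = (\<gamma>, w)" by (cases x)
  have raise: "\<gamma>(i := \<gamma> i + 1) = \<beta> \<longleftrightarrow> 1 \<le> \<beta> i \<and> \<gamma> = \<beta>(i := \<beta> i - 1)"
    by (auto simp: fun_eq_iff)
  have "(\<beta>(i := \<beta> i - 1), u) \<in> basisA p m n t"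
    by (rule basisA_downward_closed[OF b]) auto
  then show "derA p m n t i (monA (\<beta>, u)) x = (if 1 \<le> \<beta> i then monA (\<beta>(i := \<beta> i - 1), u) else (\<lambda>_. 0)) x"
    using i unfolding x derA_def monA_def raise by auto
qed

lemma derA_monA_odd_free:
  assumes "r \<notin> Y0 m"
  shows "derA p m n t r (monA (\<beta>, {})) = (\<lambda>_. 0)"
  using assms unfolding derA_def monA_def by (auto intro!: ext)

lemma derA_one: "derA p m n t r (monA ((\<lambda>_. 0), {})) = (\<lambda>_. 0)"
  unfolding derA_def monA_def by (auto intro!: ext simp: fun_eq_iff)

lemma derA_monA_single_exp:
  assumes l: "l \<in> Y0 m" and b: "1 \<le> b" and lb: "(single_exp l b, {}) \<in> basisA p m n t"
  shows "derA p m n t r (monA (single_exp l b, {})) =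
    (if r = l then monA (single_exp l (b - 1), {}) else (\<lambda>_. 0))"
proof (cases "r \<in> Y0 m")
  case True
  have "(single_exp l b)(r := single_exp l b r - 1) = single_exp l (b - 1)" if "r = l"
    using that by (auto simp: single_exp_def)
  then show ?thesis
    using derA_monA_Y0[OF True lb] b by (auto simp: single_exp_def)
next
  case False
  then show ?thesis using l derA_monA_odd_free[OF False] by auto
qed

lemma derA_monA_single_exp_one:
  assumes "l \<in> Y0 m" "(single_exp l 1, {}) \<in> basisA p m n t"
  shows "derA p m n t r (monA (single_exp l 1, {})) = (if r = l then monA ((\<lambda>_. 0), {}) else (\<lambda>_. 0))"
  by (subst derA_monA_single_exp[OF assms(1) _ assms(2)]) simp_all

lemma derA_monA_odd_generator:
  assumes k: "k \<in> Y1 m n"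
  shows "derA p m n t r (monA ((\<lambda>_. 0), {k})) = (if r = k then monA ((\<lambda>_. 0), {}) else (\<lambda>_. 0))"
proof
  fix x :: mono
  obtain \<gamma> w where x: "x = (\<gamma>, w)" by (cases x)
  have "\<gamma>(r := \<gamma> r + 1) \<noteq> (\<lambda>_. 0)"
    by (metis fun_upd_same add_eq_0_iff_both_eq_0 one_neq_zero)
  moreover have "r \<notin> w \<Longrightarrow> insert r w = {k} \<longleftrightarrow> r = k \<and> w = {}"
    by auto
  ultimately show "derA p m n t r (monA ((\<lambda>_. 0), {k})) x = (if r = k then monA ((\<lambda>_. 0), {}) else (\<lambda>_. 0)) x"
    using k zero_in_basisA Y1_not_Y0[OF k] unfolding x derA_def monA_def by auto
qed

definition monW :: "nat \<Rightarrow> mono \<Rightarrow> 'a::field wel" where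
  "monW r a = (\<lambda>s. if s = r then monA a else (\<lambda>_. 0))"

lemma monW_apply: "monW r a s = (if s = r then monA a else (\<lambda>_. 0))"
  by (simp add: monW_def)

definition basisW :: "nat \<Rightarrow> nat \<Rightarrow> nat \<Rightarrow> (nat \<Rightarrow> nat) \<Rightarrow> (nat \<times> mono) set" where
  "basisW p m n t = {(r, a). r \<in> Y m n \<and> a \<in> basisA p m n t \<and> even (card (snd a) + tau m r)}"

definition total_deg :: "nat \<Rightarrow> mono \<Rightarrow> nat" where
  "total_deg m a = sum (fst a) (Y0 m) + card (snd a)"

lemma total_deg_lower:
  assumes "i \<in> Y0 m" "b \<le> \<alpha> i"
  shows "total_deg m (\<alpha>(i := \<alpha> i - b), u) + b = total_deg m (\<alpha>, u)"
proof -
  have "sum (\<alpha>(i := \<alpha> i - b)) (Y0 m) = (\<alpha> i - b) + sum \<alpha> (Y0 m - {i})"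
    using assms(1) by (simp add: sum.remove[OF finite_Y0])
  moreover have "sum \<alpha> (Y0 m) = \<alpha> i + sum \<alpha> (Y0 m - {i})"
    using assms(1) by (simp add: sum.remove[OF finite_Y0])
  ultimately show ?thesis using assms(2) by (simp add: total_deg_def)
qed

lemma basisW_downward_closed:
  "(r, (\<alpha>, u)) \<in> basisW p m n t \<Longrightarrow> (\<And>i. \<beta> i \<le> \<alpha> i) \<Longrightarrow> (r, (\<beta>, u)) \<in> basisW p m n t"
  unfolding basisW_def using basisA_downward_closed[of \<alpha> u p m n t \<beta> u] by auto

lemma Wev_in_carrierA: "Z \<in> Wev p m n t \<Longrightarrow> Z s \<in> carrierA p m n t"
  unfolding Wev_def carrierA_def by auto

lemma zero_in_Wev: "(\<lambda>r a. 0) \<in> Wev p m n t"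
  unfolding Wev_def by auto

lemma monW_in_Wev: "(r, a) \<in> basisW p m n t \<Longrightarrow> monW r a \<in> Wev p m n t"
  unfolding basisW_def Wev_def monW_def monA_def by auto

lemma monW_in_Wdeg:
  "(r, a) \<in> basisW p m n t \<Longrightarrow> monW r a \<in> Wdeg p m n t (int (total_deg m a) - 1)"
  using monW_in_Wev[of r a] unfolding Wdeg_def total_deg_def monW_def monA_def
  by (auto split: if_splits)

lemma Wdeg_subset_Wev: "Wdeg p m n t i \<subseteq> Wev p m n t"
  unfolding Wdeg_def by auto

lemma Wdeg_below_minus_one:
  assumes "X \<in> Wdeg p m n t i" "i < -1"
  shows "X = (\<lambda>r a. 0)"
proof (intro ext)
  fix r a
  show "X r a = 0"
  proof (rule ccontr)
    assume "X r a \<noteq> 0"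
    then have "int (\<Sum>j\<in>Y0 m. fst a j) + int (card (snd a)) - 1 = i"
      using assms(1) unfolding Wdeg_def by blast
    then show False using assms(2) by linarith
  qed
qed

lemma actW_monW:
  assumes "r \<in> Y m n"
  shows "actW p m n t (monW r a) g = multA p m n t (monA a) (derA p m n t r g)"
proof
  fix x
  have "actW p m n t (monW r a) g x = (\<Sum>s\<in>Y m n. multA p m n t (monW r a s) (derA p m n t s g) x)"
    unfolding actW_def by simp
  also have "\<dots> = multA p m n t (monW r a r) (derA p m n t r g) x"
    by (rule sum_eq_single) (auto simp: assms monW_def multA_zero_left finite_Y)
  finally show "actW p m n t (monW r a) g x = multA p m n t (monA a) (derA p m n t r g) x"
    by (simp add: monW_def)
qed

lemma actW_zero_left: "actW p m n t (\<lambda>r a. 0) g = (\<lambda>_. 0)"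
  unfolding actW_def by (simp add: multA_zero_left)

lemma actW_zero_right: "actW p m n t Z (\<lambda>_. 0) = (\<lambda>_. 0)"
  unfolding actW_def by (simp add: derA_zero multA_zero_right)

lemma brW_zero_left: "brW p m n t (\<lambda>r a. 0) Z = (\<lambda>r a. 0)"
  unfolding brW_def by (simp add: actW_zero_left actW_zero_right)

lemma brW_zero_right: "brW p m n t X (\<lambda>r a. 0) = (\<lambda>r a. 0)"
  unfolding brW_def by (simp add: actW_zero_left actW_zero_right)

lemma actW_of_coordinate:
  assumes r0: "r0 \<in> Y m n" and Z: "Z \<in> Wev p m n t"
    and h: "\<And>r. derA p m n t r h = (if r = r0 then monA ((\<lambda>_. 0), {}) else (\<lambda>_. 0))"
  shows "actW p m n t Z h = Z r0"
proof
  fix a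
  have "actW p m n t Z h a = (\<Sum>r\<in>Y m n. multA p m n t (Z r) (derA p m n t r h) a)"
    unfolding actW_def by simp
  also have "\<dots> = multA p m n t (Z r0) (derA p m n t r0 h) a"
    by (rule sum_eq_single) (auto simp: r0 h multA_zero_right finite_Y)
  also have "\<dots> = Z r0 a"
    by (simp add: h multA_one_right Wev_in_carrierA[OF Z])
  finally show "actW p m n t Z h a = Z r0 a" .
qed

section \<open>Brackets with distinguished elements\<close>

lemma brW_partial:
  assumes i: "i \<in> Y0 m" and Z: "Z \<in> Wev p m n t"
  shows "brW p m n t (monW i ((\<lambda>_. 0), {})) Z = (\<lambda>s. derA p m n t i (Z s))"
proof -
  have iY: "i \<in> Y m n" using i Y0_subset_Y by blast
  have "actW p m n t (monW i ((\<lambda>_. 0), {})) (Z s) = derA p m n t i (Z s)" for s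
    by (simp add: actW_monW[OF iY] multA_one_left derA_in_carrierA)
  moreover have "actW p m n t Z (monW i ((\<lambda>_. 0), {}) s) = (\<lambda>_. 0)" for s
    by (simp add: monW_def derA_one actW_zero_right)
       (simp add: actW_def derA_one multA_zero_right)
  ultimately show ?thesis unfolding brW_def by simp
qed

lemma brW_torus_Y0:
  assumes k: "k \<in> Y0 m" and e: "(single_exp k 1, {}) \<in> basisA p m n t" and Z: "Z \<in> Wev p m n t"
  shows "brW p m n t (monW k (single_exp k 1, {})) Z s (\<gamma>, w) =
    (of_nat (\<gamma> k) - (if s = k then 1 else 0)) * Z s (\<gamma>, w)"
proof -
  have kY: "k \<in> Y m n" using k Y0_subset_Y by blast
  have act: "actW p m n t (monW k (single_exp k 1, {})) (Z s) (\<gamma>, w) =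
    (if (\<gamma>, w) \<in> basisA p m n t \<and> (\<forall>i. single_exp k 1 i \<le> \<gamma> i)
     then of_nat (\<Prod>i\<in>Y0 m. \<gamma> i choose single_exp k 1 i)
       * derA p m n t k (Z s) (\<lambda>i. \<gamma> i - single_exp k 1 i, w)
     else 0)"
    unfolding actW_monW[OF kY] multA_monA_left[OF e] by simp
  have "actW p m n t (monW k (single_exp k 1, {})) (Z s) (\<gamma>, w) = of_nat (\<gamma> k) * Z s (\<gamma>, w)"
  proof (cases "(\<gamma>, w) \<in> basisA p m n t \<and> 1 \<le> \<gamma> k")
    case True
    have le: "\<forall>i. single_exp k 1 i \<le> \<gamma> i" using True by (simp add: single_exp_def)
    have choose: "(\<Prod>i\<in>Y0 m. \<gamma> i choose single_exp k 1 i) = \<gamma> k"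
      by (subst prod_eq_single[OF finite_Y0 k]) (auto simp: single_exp_def)
    have lower: "(\<lambda>i. \<gamma> i - single_exp k 1 i, w) \<in> basisA p m n t"
      using True by (auto intro: basisA_downward_closed[of \<gamma> w])
    have raise: "(\<lambda>i. \<gamma> i - single_exp k 1 i)(k := \<gamma> k - single_exp k 1 k + 1) = \<gamma>"
      using True by (auto simp: single_exp_def fun_eq_iff)
    have "derA p m n t k (Z s) (\<lambda>i. \<gamma> i - single_exp k 1 i, w) = Z s (\<gamma>, w)"
      using lower k unfolding derA_def by (simp only: case_prod_conv if_True raise simp_thms)
    then show ?thesis
      using True le by (simp only: act choose if_True simp_thms)
  next
    case outside: False
    show ?thesis
    proof (cases "(\<gamma>, w) \<in> basisA p m n t")
      case True
      then have "\<gamma> k = 0" "\<not> (\<forall>i. single_exp k 1 i \<le> \<gamma> i)"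
        using outside by (auto simp: single_exp_def dest: spec[of _ k])
      then show ?thesis unfolding act by auto
    next
      case False
      then have "Z s (\<gamma>, w) = 0" using Z unfolding Wev_def by auto
      then show ?thesis unfolding act using False by simp
    qed
  qed
  moreover have "actW p m n t Z (monW k (single_exp k 1, {}) s) = (if s = k then Z s else (\<lambda>_. 0))"
    using actW_of_coordinate[OF kY Z derA_monA_single_exp_one[OF k e]]
    by (simp add: monW_def actW_zero_right)
  ultimately show ?thesis
    unfolding brW_def by (simp add: algebra_simps)
qed

lemma brW_torus_Y1:
  assumes k: "k \<in> Y1 m n" and Z: "Z \<in> Wev p m n t"
  shows "brW p m n t (monW k ((\<lambda>_. 0), {k})) Z s (\<gamma>, w) =
    ((if k \<in> w then 1 else 0) - (if s = k then 1 else 0)) * Z s (\<gamma>, w)"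
proof -
  have kY: "k \<in> Y m n" using k Y1_subset_Y by blast
  have e: "((\<lambda>_. 0), {k}) \<in> basisA p m n t" using k unfolding basisA_def by auto
  have "actW p m n t (monW k ((\<lambda>_. 0), {k})) (Z s) (\<gamma>, w) = (if k \<in> w then 1 else 0) * Z s (\<gamma>, w)"
  proof (cases "(\<gamma>, w) \<in> basisA p m n t \<and> k \<in> w")
    case True
    have lower: "(\<gamma>, w - {k}) \<in> basisA p m n t"
      using True by (auto intro: basisA_downward_closed[of \<gamma> w])
    have below: "{j \<in> w - {k}. j < k} = {j \<in> w. j < k}" "{j \<in> w. j \<noteq> k \<and> j < k} = {j \<in> w. j < k}"
      by auto
    have "derA p m n t k (Z s) (\<gamma>, w - {k}) = (-1) ^ card {j \<in> w. j < k} * Z s (\<gamma>, w)"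
      using lower k True Y1_not_Y0[OF k] unfolding derA_def by (simp add: below insert_absorb)
    moreover have "((-1::'a) ^ card {j \<in> w. j < k}) * (-1) ^ card {j \<in> w. j < k} = 1"
      by (simp flip: power_add)
    ultimately show ?thesis
      using True by (simp add: actW_monW[OF kY] multA_monA_left[OF e] inv_count_singleton below
          mult.assoc[symmetric])
  next
    case False
    moreover have "(\<gamma>, w) \<notin> basisA p m n t \<Longrightarrow> Z s (\<gamma>, w) = 0"
      using Z unfolding Wev_def by auto
    ultimately show ?thesis
      by (auto simp: actW_monW[OF kY] multA_monA_left[OF e])
  qed
  moreover have "actW p m n t Z (monW k ((\<lambda>_. 0), {k}) s) = (if s = k then Z s else (\<lambda>_. 0))"
    using actW_of_coordinate[OF kY Z derA_monA_odd_generator[OF k]]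
    by (simp add: monW_def actW_zero_right)
  ultimately show ?thesis
    unfolding brW_def by (simp add: algebra_simps)
qed

definition torus :: "nat \<Rightarrow> nat \<Rightarrow> 'a::field wel" where
  "torus m k = (if k \<in> Y0 m then monW k (single_exp k 1, {}) else monW k ((\<lambda>_. 0), {k}))"

definition weight :: "nat \<Rightarrow> nat \<Rightarrow> nat \<Rightarrow> mono \<Rightarrow> 'a::field" where
  "weight m k s a = (if k \<in> Y0 m then of_nat (fst a k) else if k \<in> snd a then 1 else 0)
     - (if s = k then 1 else 0)"

lemma brW_torus:
  assumes k: "k \<in> Y m n" and e: "k \<in> Y0 m \<Longrightarrow> (single_exp k 1, {}) \<in> basisA p m n t"
    and Z: "Z \<in> Wev p m n t"
  shows "brW p m n t (torus m k) Z s a = weight m k s a * Z s a"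
proof (cases a)
  case (Pair \<gamma> w)
  show ?thesis
  proof (cases "k \<in> Y0 m")
    case True
    then show ?thesis
      unfolding Pair torus_def weight_def using brW_torus_Y0[OF True e Z] by simp
  next
    case False
    then have "k \<in> Y1 m n" using k Y_not_Y0_iff by blast
    then show ?thesis
      unfolding Pair using brW_torus_Y1[OF _ Z] False by (simp add: torus_def weight_def)
  qed
qed

lemma torus_in_Wdeg:
  assumes k: "k \<in> Y m n" and e: "k \<in> Y0 m \<Longrightarrow> (single_exp k 1, {}) \<in> basisA p m n t"
  shows "torus m k \<in> Wdeg p m n t 0"
proof (cases "k \<in> Y0 m")
  case True
  have "(k, (single_exp k 1, {})) \<in> basisW p m n t"
    using k e True by (simp add: basisW_def tau_Y0)
  moreover have "total_deg m (single_exp k 1, {}) = 1"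
    unfolding total_deg_def by (subst sum_eq_single[OF finite_Y0 True]) (auto simp: single_exp_def)
  ultimately show ?thesis
    using monW_in_Wdeg True by (fastforce simp: torus_def)
next
  case False
  then have "k \<in> Y1 m n" using k Y_not_Y0_iff by blast
  then have "(k, ((\<lambda>_. 0), {k})) \<in> basisW p m n t"
    using k by (simp add: basisW_def basisA_def tau_Y1)
  moreover have "total_deg m ((\<lambda>_. 0), {k}) = 1" by (simp add: total_deg_def)
  ultimately show ?thesis
    using monW_in_Wdeg False by (fastforce simp: torus_def)
qed

definition bracket_coeff :: "nat \<Rightarrow> (nat \<Rightarrow> nat) \<Rightarrow> nat \<Rightarrow> nat \<Rightarrow> 'a::field" where
  "bracket_coeff r \<alpha> l b = of_nat (\<alpha> l choose b) - (if r = l then of_nat (\<alpha> l choose (b - 1)) else 0)"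

lemma actW_raise_single_exp:
  assumes l: "l \<in> Y0 m" and a: "(\<alpha>, u) \<in> basisA p m n t" and b: "1 \<le> b" "b \<le> \<alpha> l"
  shows "actW p m n t (monW l (single_exp l b, {})) (monA (\<alpha>(l := \<alpha> l - (b - 1)), u)) =
    (\<lambda>x. of_nat (\<alpha> l choose b) * monA (\<alpha>, u) x)"
proof -
  let ?\<alpha>' = "\<alpha>(l := \<alpha> l - (b - 1))"
  have lY: "l \<in> Y m n" using l Y0_subset_Y by blast
  have a': "(?\<alpha>', u) \<in> basisA p m n t"
    by (rule basisA_downward_closed[OF a]) auto
  have lower: "?\<alpha>'(l := ?\<alpha>' l - 1) = \<alpha>(l := \<alpha> l - b)"
    using b by (auto simp: fun_eq_iff)
  have "1 \<le> ?\<alpha>' l" using b by simp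
  then have "derA p m n t l (monA (?\<alpha>', u)) = (monA (\<alpha>(l := \<alpha> l - b), u) :: mono \<Rightarrow> 'a)"
    by (simp only: derA_monA_Y0[OF l a'] if_True lower)
  then show ?thesis
    by (simp only: actW_monW[OF lY] multA_single_exp_left[OF l a b(2)])
qed

lemma actW_lower_single_exp:
  assumes l: "l \<in> Y0 m" and a: "(\<alpha>, u) \<in> basisA p m n t" and b: "1 \<le> b" "b \<le> \<alpha> l"
    and r: "r \<in> Y m n"
  shows "actW p m n t (monW r (\<alpha>(l := \<alpha> l - (b - 1)), u)) (monA (single_exp l b, {})) =
    (if r = l then (\<lambda>x. of_nat (\<alpha> l choose (b - 1)) * monA (\<alpha>, u) x) else (\<lambda>_. 0))"
proof -
  have e: "(single_exp l b, {}) \<in> basisA p m n t"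
    by (rule basisA_downward_closed[OF a]) (auto simp: single_exp_def b)
  have "multA p m n t (monA (\<alpha>(l := \<alpha> l - (b - 1)), u)) (monA (single_exp l (b - 1), {})) =
      (\<lambda>x. of_nat (\<alpha> l choose (b - 1)) * (monA (\<alpha>, u) x :: 'a))"
    by (rule multA_single_exp_right[OF l a]) (use b in simp)
  then show ?thesis
    by (simp add: actW_monW[OF r] derA_monA_single_exp[OF l b(1) e] multA_zero_right)
qed

lemma brW_raising:
  assumes l: "l \<in> Y0 m" and a: "(\<alpha>, u) \<in> basisA p m n t" and b: "1 \<le> b" "b \<le> \<alpha> l"
    and r: "r \<in> Y m n"
  shows "brW p m n t (monW l (single_exp l b, {})) (monW r (\<alpha>(l := \<alpha> l - (b - 1)), u)) =
    (\<lambda>s x. bracket_coeff r \<alpha> l b * monW r (\<alpha>, u) s x)"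
  using actW_raise_single_exp[OF l a b, where 'a='a] actW_lower_single_exp[OF l a b r, where 'a='a]
  by (auto simp: fun_eq_iff brW_def monW_apply actW_zero_right bracket_coeff_def algebra_simps)

section \<open>Binomial coefficients in prime characteristic\<close>

lemma coeff_monom_plus_one_power:
  assumes "0 < N"
  shows "coeff ((monom (1::'a::comm_ring_1) N + 1) ^ c) N = of_nat c"
proof -
  have "(monom (1::'a) N + 1) ^ c = (\<Sum>k\<le>c. of_nat (c choose k) * monom 1 N ^ k * 1 ^ (c - k))"
    by (rule binomial_ring)
  also have "\<dots> = (\<Sum>k\<le>c. monom (of_nat (c choose k)) (N * k))"
    by (intro sum.cong refl) (simp add: monom_power of_nat_poly smult_monom)
  finally have "coeff ((monom (1::'a) N + 1) ^ c) N = (\<Sum>k\<le>c. coeff (monom (of_nat (c choose k)) (N * k)) N)"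
    by (simp add: coeff_sum)
  also have "\<dots> = (\<Sum>k\<le>c. if k = 1 then of_nat c else 0)"
    using assms by (intro sum.cong refl) auto
  also have "\<dots> = of_nat c"
    by (cases "c = 0") simp_all
  finally show ?thesis .
qed

text \<open>A special case of Lucas' theorem: compare the coefficients of \<open>X ^ p ^ k\<close> in
  \<open>(1 + X) ^ (p ^ k * c) = (1 + X ^ p ^ k) ^ c\<close>, where \<open>p = CHAR('a)\<close>.\<close>

lemma of_nat_choose_char_power:
  assumes p: "prime CHAR('a::comm_ring_1)"
  shows "of_nat (CHAR('a) ^ k * c choose CHAR('a) ^ k) = (of_nat c :: 'a)"
proof -
  define N where "N = CHAR('a) ^ k"
  have N: "0 < N" using p by (simp add: N_def prime_gt_0_nat)
  have "[:1, 1::'a:] ^ N = (monom 1 1 + 1) ^ N"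
    by (simp add: monom_altdef one_pCons)
  also have "\<dots> = monom 1 1 ^ N + 1 ^ N"
    by (rule freshmans_dream') (simp_all add: p N_def)
  finally have "[:1, 1::'a:] ^ (N * c) = (monom 1 N + 1) ^ c"
    by (simp add: power_mult monom_power)
  then have "coeff ([:1, 1::'a:] ^ (N * c)) N = of_nat c"
    using coeff_monom_plus_one_power[OF N] by simp
  moreover have "N \<le> N * c \<or> c = 0" by (cases c) simp_all
  ultimately show ?thesis
    using coeff_linear_poly_power[of N "N * c" "1::'a" 1] unfolding N_def[symmetric]
    by (cases "c = 0") (auto simp: binomial_eq_0)
qed

lemma exists_choose_nonzero:
  assumes p: "prime CHAR('a::comm_ring_1)" and q: "0 < q" and not_power: "\<nexists>k. q = CHAR('a) ^ k"
  shows "\<exists>b. 0 < b \<and> b < q \<and> of_nat (q choose b) \<noteq> (0::'a)"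
proof -
  obtain c where qc: "q = CHAR('a) ^ multiplicity CHAR('a) q * c" and c: "\<not> CHAR('a) dvd c"
    using multiplicity_decompose'[of q "CHAR('a)"] p q by (metis not_prime_unit neq0_conv)
  define N where "N = CHAR('a) ^ multiplicity CHAR('a) q"
  have qN: "q = N * c" using qc by (simp add: N_def)
  have "0 < N" using p by (simp add: N_def prime_gt_0_nat)
  moreover have "c \<noteq> 0" "c \<noteq> 1" using qc q not_power by (auto intro: gr0I)
  then have "N < q" using qN \<open>0 < N\<close> by simp
  moreover have "of_nat (q choose N) = (of_nat c :: 'a)"
    using of_nat_choose_char_power[OF p, of "multiplicity CHAR('a) q" c]
    unfolding N_def[symmetric] qN[symmetric] .
  then have "of_nat (q choose N) \<noteq> (0 :: 'a)"
    using c by (simp add: of_nat_eq_0_iff_char_dvd)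
  ultimately show ?thesis by blast
qed

text \<open>Otherwise \<open>q choose b\<close> would be constant on \<open>1 \<le> b < q\<close>, hence equal to
  \<open>q choose 1 = q = 0\<close>.\<close>

lemma exists_choose_neq_choose_pred:
  assumes p: "prime CHAR('a::comm_ring_1)" and q: "0 < q" and not_power: "\<nexists>k. q = CHAR('a) ^ k"
    and q0: "of_nat q = (0::'a)"
  shows "\<exists>b. 2 \<le> b \<and> b < q \<and> of_nat (q choose b) \<noteq> (of_nat (q choose (b - 1)) :: 'a)"
proof (rule ccontr)
  assume "\<not> ?thesis"
  then have step: "2 \<le> b \<Longrightarrow> b < q \<Longrightarrow> of_nat (q choose b) = (of_nat (q choose (b - 1)) :: 'a)" for b
    by blast
  have "1 \<le> b \<Longrightarrow> b < q \<Longrightarrow> of_nat (q choose b) = (0::'a)" for b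
  proof (induction b)
    case (Suc b)
    then show ?case using q0 step[of "Suc b"] by (cases "b = 0") auto
  qed simp
  then show False using exists_choose_nonzero[OF p q not_power] by force
qed

section \<open>Choice of the raising element\<close>

lemma bracket_coeff_top:
  assumes "1 \<le> \<alpha> l"
  shows "bracket_coeff r \<alpha> l (\<alpha> l) = (if r = l then 1 - of_nat (\<alpha> l) else 1)"
proof -
  have "\<alpha> l choose (\<alpha> l - 1) = \<alpha> l"
    using binomial_symmetric[of 1 "\<alpha> l"] assms by simp
  then show ?thesis by (simp add: bracket_coeff_def)
qed

lemma bracket_coeff_two:
  assumes two: "(2::'a::field) \<noteq> 0" and r: "2 \<le> \<alpha> r" and one: "of_nat (\<alpha> r) = (1::'a)"
  shows "bracket_coeff r \<alpha> r 2 = (-1 :: 'a)"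
proof -
  have "2 * (\<alpha> r choose 2) = \<alpha> r * (\<alpha> r - 1)"
    unfolding choose_two using r by (cases "even (\<alpha> r)") auto
  then have "(2::'a) * of_nat (\<alpha> r choose 2) = of_nat (\<alpha> r) * of_nat (\<alpha> r - 1)"
    by (metis of_nat_mult of_nat_numeral)
  also have "of_nat (\<alpha> r - 1) = (of_nat (\<alpha> r) - 1 :: 'a)"
    using r by (simp add: of_nat_diff)
  finally have "of_nat (\<alpha> r choose 2) = (0::'a)"
    using one two by simp
  then show ?thesis using one by (simp add: bracket_coeff_def)
qed

lemma exists_raising_exp_divisible:
  fixes \<alpha> :: "nat \<Rightarrow> nat" and K :: "nat set"
  assumes p: "prime CHAR('a::field)" and q: "1 < q" and not_power: "\<nexists>k. q = CHAR('a) ^ k"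
    and q0: "of_nat q = (0::'a)" and K: "finite K" and sum: "sum \<alpha> K = q"
    and dvd: "\<forall>k\<in>K. CHAR('a) dvd \<alpha> k"
  shows "\<exists>l\<in>K. \<exists>b. 2 \<le> b \<and> b < q \<and> b \<le> \<alpha> l \<and> bracket_coeff r \<alpha> l b \<noteq> (0::'a)"
proof -
  have "\<exists>l\<in>K. 0 < \<alpha> l"
  proof (rule ccontr)
    assume "\<not> ?thesis"
    then have "sum \<alpha> K = 0" by (intro sum.neutral) auto
    then show False using sum q by simp
  qed
  then obtain l where l: "l \<in> K" "0 < \<alpha> l" ..
  have "CHAR('a) \<le> \<alpha> l" using dvd l by (simp add: dvd_imp_le)
  then have l2: "2 \<le> \<alpha> l" using prime_ge_2_nat[OF p] by linarith
  have lq: "\<alpha> l \<le> q" using sum l K by (auto intro: member_le_sum)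
  have l0: "of_nat (\<alpha> l) = (0::'a)" using dvd l by (simp add: of_nat_eq_0_iff_char_dvd)
  show ?thesis
  proof (cases "\<alpha> l < q")
    case True
    then show ?thesis
      using l l2 l0 bracket_coeff_top[of \<alpha> l r, where 'a='a] by (intro bexI[of _ l] exI[of _ "\<alpha> l"]) auto
  next
    case False
    then have lq: "\<alpha> l = q" using lq by simp
    show ?thesis
    proof (cases "r = l")
      case True
      obtain b where "2 \<le> b" "b < q" "of_nat (q choose b) \<noteq> (of_nat (q choose (b - 1)) :: 'a)"
        using exists_choose_neq_choose_pred[OF p _ not_power q0] q by auto
      then show ?thesis
        using True l lq by (intro bexI[of _ l] exI[of _ b]) (auto simp: bracket_coeff_def)
    next
      case False
      obtain b where b: "0 < b" "b < q" "of_nat (q choose b) \<noteq> (0::'a)"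
        using exists_choose_nonzero[OF p _ not_power] q by auto
      moreover have "b \<noteq> 1" using b q0 by auto
      ultimately show ?thesis
        using False l lq by (intro bexI[of _ l] exI[of _ b]) (auto simp: bracket_coeff_def)
    qed
  qed
qed

lemma of_nat_eq_0_of_weights:
  fixes \<alpha> :: "nat \<Rightarrow> nat" and K :: "nat set"
  assumes K: "finite K"
    and sum: "sum \<alpha> K + (if s \<in> K then 1 else 0) = q + (if r \<in> K then 1 else 0)"
    and wt: "\<forall>k\<in>K. of_nat (\<alpha> k) + (if s = k then 1 else 0) = (if r = k then 1 else (0::'a::comm_ring_1))"
  shows "of_nat q = (0::'a)"
proof -
  have "(\<Sum>k\<in>K. of_nat (\<alpha> k) + (if s = k then 1 else 0)) = (\<Sum>k\<in>K. if r = k then 1 else (0::'a))"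
    using wt by (intro sum.cong) auto
  then have "of_nat (sum \<alpha> K + (if s \<in> K then 1 else 0)) = (of_nat (if r \<in> K then 1 else 0) :: 'a)"
    using K by (simp add: sum.distrib split: if_splits)
  then show ?thesis
    unfolding sum by (auto split: if_splits)
qed

lemma exists_raising_exp_source:
  fixes \<alpha> :: "nat \<Rightarrow> nat" and K :: "nat set"
  assumes p3: "3 < CHAR('a::field)" and K: "finite K" and s: "s \<in> K" "s \<noteq> r"
    and sum: "sum \<alpha> K + 1 = q + (if r \<in> K then 1 else 0)"
    and ws: "of_nat (\<alpha> s + 1) = (0::'a)" and wr: "r \<in> K \<Longrightarrow> 1 \<le> \<alpha> r"
  shows "\<exists>b. 2 \<le> b \<and> b < q \<and> b \<le> \<alpha> s \<and> bracket_coeff r \<alpha> s b \<noteq> (0::'a)"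
proof -
  have "CHAR('a) dvd \<alpha> s + 1" using ws by (simp only: of_nat_eq_0_iff_char_dvd)
  then have s2: "2 \<le> \<alpha> s" using p3 by (auto dest!: dvd_imp_le)
  have "\<alpha> s + (if r \<in> K then \<alpha> r else 0) \<le> sum \<alpha> K"
    using K s sum.subset_diff[of "{s, r}" K \<alpha>] sum.subset_diff[of "{s}" K \<alpha>] by auto
  then have "\<alpha> s < q" using sum wr by (auto split: if_splits)
  then show ?thesis
    using s s2 bracket_coeff_top[of \<alpha> s r, where 'a='a] by (intro exI[of _ "\<alpha> s"]) auto
qed

lemma exists_raising_exp_target:
  fixes \<alpha> :: "nat \<Rightarrow> nat" and K :: "nat set"
  assumes p: "prime CHAR('a::field)" and p3: "3 < CHAR('a)"
    and q: "1 < q" and not_power: "\<nexists>k. q = CHAR('a) ^ k" and q0: "of_nat q = (0::'a)"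
    and K: "finite K" and r: "r \<in> K" and sum: "sum \<alpha> K = q + 1"
    and wr: "of_nat (\<alpha> r) = (1::'a)" and dvd: "\<forall>k\<in>K - {r}. CHAR('a) dvd \<alpha> k"
  shows "\<exists>l\<in>K. \<exists>b. 2 \<le> b \<and> b < q \<and> b \<le> \<alpha> l \<and> bracket_coeff r \<alpha> l b \<noteq> (0::'a)"
proof (cases "2 \<le> \<alpha> r")
  case True
  have "\<not> CHAR('a) dvd 2" using p3 by (auto dest: dvd_imp_le)
  then have "(2::'a) \<noteq> 0" using of_nat_eq_0_iff_char_dvd[of 2, where 'a='a] by simp
  then have "bracket_coeff r \<alpha> r 2 = (-1 :: 'a)" using True wr by (rule bracket_coeff_two)
  moreover have "CHAR('a) \<le> q" using q0 q by (simp add: of_nat_eq_0_iff_char_dvd dvd_imp_le)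
  ultimately show ?thesis
    using True r p3 by (intro bexI[of _ r] exI[of _ 2]) auto
next
  case False
  then have "\<alpha> r = 1" using wr by (cases "\<alpha> r") auto
  then have "sum \<alpha> (K - {r}) = q" using sum r K by (simp add: sum.remove)
  then obtain l b where "l \<in> K - {r}" "2 \<le> b" "b < q" "b \<le> \<alpha> l" "bracket_coeff r \<alpha> l b \<noteq> (0::'a)"
    using exists_raising_exp_divisible[OF p q not_power q0] K dvd by blast
  then show ?thesis by blast
qed

text \<open>The hypotheses below, for \<open>K = Y0\<close>, are what a nonzero coefficient of \<open>x^w D_s\<close>
  in \<open>D (x^\<alpha> x^u D_r)\<close> forces: a degree count and the even weights.\<close>

lemma exists_raising_exp:
  fixes \<alpha> :: "nat \<Rightarrow> nat" and K :: "nat set"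
  assumes p: "prime CHAR('a::field)" and p3: "3 < CHAR('a)"
    and q: "1 < q" and not_power: "\<nexists>k. q = CHAR('a) ^ k" and K: "finite K"
    and sum: "sum \<alpha> K + (if s \<in> K then 1 else 0) = q + (if r \<in> K then 1 else 0)"
    and wt: "\<forall>k\<in>K. of_nat (\<alpha> k) + (if s = k then 1 else 0) = (if r = k then 1 else (0::'a))"
  shows "\<exists>l\<in>K. \<exists>b. 2 \<le> b \<and> b < q \<and> b \<le> \<alpha> l \<and> bracket_coeff r \<alpha> l b \<noteq> (0::'a)"
proof -
  have q0: "of_nat q = (0::'a)" by (rule of_nat_eq_0_of_weights[OF K sum wt])
  have wt_at: "of_nat (\<alpha> k) + (if s = k then 1 else 0) = (if r = k then 1 else (0::'a))" if "k \<in> K" for k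
    using wt that by blast
  have dvd: "CHAR('a) dvd \<alpha> k" if "k \<in> K" "k \<noteq> s \<or> s = r" "k \<noteq> r" for k
    using wt_at[OF that(1)] that by (auto simp: of_nat_eq_0_iff_char_dvd[symmetric])
  consider (source) "s \<in> K" "s \<noteq> r" | (target) "r \<in> K" "s \<notin> K" | (balanced) "s \<notin> K \<and> r \<notin> K \<or> s = r"
    by blast
  then show ?thesis
  proof cases
    case source
    have "r \<in> K \<Longrightarrow> 1 \<le> \<alpha> r" using wt_at[of r] source by (cases "\<alpha> r") auto
    then show ?thesis
      using exists_raising_exp_source[OF p3 K source, of \<alpha> q] wt_at[of s] sum source
      by (auto simp: add.commute)
  next
    case target
    then have "s \<noteq> r" by blast
    have "sum \<alpha> K = q + 1" using sum target by simp
    moreover have "of_nat (\<alpha> r) = (1::'a)" using wt_at[of r] target \<open>s \<noteq> r\<close> by simp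
    moreover have "\<forall>k\<in>K - {r}. CHAR('a) dvd \<alpha> k" using dvd target by blast
    ultimately show ?thesis
      using exists_raising_exp_target[OF p p3 q not_power q0 K target(1)] by blast
  next
    case balanced
    then have "\<forall>k\<in>K. CHAR('a) dvd \<alpha> k"
      using dvd wt_at by (auto simp: of_nat_eq_0_iff_char_dvd[symmetric])
    then show ?thesis
      using exists_raising_exp_divisible[OF p q not_power q0 K] sum balanced by auto
  qed
qed

section \<open>Derivations of degree \<open>-q\<close>\<close>

locale negative_degree_derivation =
  fixes p m n :: nat and t :: "nat \<Rightarrow> nat" and q :: nat and D :: "'a::field wel \<Rightarrow> 'a wel"
  assumes prime: "prime p" and p_gt_3: "3 < p" and char: "CHAR('a) = p"
    and t_pos: "\<forall>i\<in>{1..m}. 0 < t i"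
    and q_gt_1: "1 < q" and not_power: "\<nexists>k. q = p ^ k"
    and D: "D \<in> Der_deg p m n t (- int q)"
begin

lemma derivation: "is_derivation p m n t D"
  using D by (simp add: Der_deg_def)

lemma D_Wev: "X \<in> Wev p m n t \<Longrightarrow> D X \<in> Wev p m n t"
  using derivation unfolding is_derivation_def by blast

lemma D_add:
  "X \<in> Wev p m n t \<Longrightarrow> Z \<in> Wev p m n t \<Longrightarrow> D (\<lambda>r a. X r a + Z r a) = (\<lambda>r a. D X r a + D Z r a)"
  using derivation unfolding is_derivation_def by blast

lemma D_smult: "X \<in> Wev p m n t \<Longrightarrow> D (\<lambda>r a. c * X r a) = (\<lambda>r a. c * D X r a)"
  using derivation unfolding is_derivation_def by blast

lemma D_brW:
  "X \<in> Wev p m n t \<Longrightarrow> Z \<in> Wev p m n t \<Longrightarrow>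
    D (brW p m n t X Z) = (\<lambda>r a. brW p m n t (D X) Z r a + brW p m n t X (D Z) r a)"
  using derivation unfolding is_derivation_def by blast

lemma D_Wdeg: "X \<in> Wdeg p m n t i \<Longrightarrow> D X \<in> Wdeg p m n t (i - int q)"
  using D unfolding Der_deg_def by auto

lemma D_zero: "D (\<lambda>r a. 0) = (\<lambda>r a. 0)"
  using D_smult[OF zero_in_Wev, of 0] by simp

lemma D_eq_zero_low_degree: "X \<in> Wdeg p m n t i \<Longrightarrow> i - int q < -1 \<Longrightarrow> D X = (\<lambda>r a. 0)"
  using D_Wdeg Wdeg_below_minus_one by blast

lemma D_brW_commute_low_degree:
  assumes E: "E \<in> Wdeg p m n t i" and i: "i - int q < -1" and Z: "Z \<in> Wev p m n t"
  shows "D (brW p m n t E Z) = brW p m n t E (D Z)"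
  using D_brW[OF subsetD[OF Wdeg_subset_Wev E] Z] D_eq_zero_low_degree[OF E i] by (simp add: brW_zero_left)

lemma single_exp_one_in_basisA:
  assumes k: "k \<in> Y0 m"
  shows "(single_exp k 1, {}) \<in> basisA p m n t"
proof -
  have "0 < t k" using t_pos k by (simp add: Y0_def)
  then have "p ^ 1 \<le> p ^ t k"
    using prime_gt_0_nat[OF prime] by (intro power_increasing) auto
  then show ?thesis
    using k prime_ge_2_nat[OF prime] unfolding basisA_def single_exp_def by auto
qed

lemma D_monW_weight:
  assumes M: "(r, a) \<in> basisW p m n t" and k: "k \<in> Y m n" and nz: "D (monW r a) s b \<noteq> 0"
  shows "weight m k r a = (weight m k s b :: 'a)"
proof -
  let ?M = "monW r a :: 'a wel"
  have M': "?M \<in> Wev p m n t" by (rule monW_in_Wev[OF M])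
  have e: "k \<in> Y0 m \<Longrightarrow> (single_exp k 1, {}) \<in> basisA p m n t"
    by (rule single_exp_one_in_basisA)
  have "brW p m n t (torus m k) ?M = (\<lambda>s' a'. weight m k r a * ?M s' a')"
  proof (intro ext)
    fix s' a'
    show "brW p m n t (torus m k) ?M s' a' = weight m k r a * ?M s' a'"
      using brW_torus[OF k e M', of s' a'] by (auto simp: monW_def monA_def)
  qed
  then have "(\<lambda>s' a'. weight m k r a * D ?M s' a') = brW p m n t (torus m k) (D ?M)"
    using D_brW_commute_low_degree[OF torus_in_Wdeg[OF k e] _ M'] D_smult[OF M'] q_gt_1 by simp
  then have "weight m k r a * D ?M s b = weight m k s b * D ?M s b"
    using brW_torus[OF k e D_Wev[OF M'], of s b] by (metis fun_eq_iff)
  then show ?thesis using nz by simp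
qed

lemma D_monW_support_no_even_vars:
  assumes M: "(r, (\<alpha>, u)) \<in> basisW p m n t"
    and IH: "\<And>r' a'. total_deg m a' < total_deg m (\<alpha>, u) \<Longrightarrow> (r', a') \<in> basisW p m n t \<Longrightarrow>
      D (monW r' a') = (\<lambda>r a. 0)"
    and nz: "D (monW r (\<alpha>, u)) s (\<gamma>, w) \<noteq> 0" and i: "i \<in> Y0 m"
  shows "\<gamma> i = 0"
proof (rule ccontr)
  assume "\<gamma> i \<noteq> 0"
  let ?M = "monW r (\<alpha>, u) :: 'a wel"
  let ?del = "monW i ((\<lambda>_. 0), {}) :: 'a wel"
  have M': "?M \<in> Wev p m n t" by (rule monW_in_Wev[OF M])
  have a: "(\<alpha>, u) \<in> basisA p m n t" using M by (simp add: basisW_def)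
  have "(i, ((\<lambda>_. 0), {})) \<in> basisW p m n t"
    using i Y0_subset_Y by (auto simp: basisW_def zero_in_basisA tau_Y0)
  then have del: "?del \<in> Wdeg p m n t (-1)"
    using monW_in_Wdeg by (fastforce simp: total_deg_def)
  have "D (\<lambda>s. derA p m n t i (?M s)) = (\<lambda>r a. 0)"
  proof (cases "1 \<le> \<alpha> i")
    case True
    have "(\<lambda>s. derA p m n t i (?M s)) = monW r (\<alpha>(i := \<alpha> i - 1), u)"
      using True by (simp add: fun_eq_iff monW_def derA_monA_Y0[OF i a] derA_zero)
    moreover have "total_deg m (\<alpha>(i := \<alpha> i - 1), u) < total_deg m (\<alpha>, u)"
      using total_deg_lower[of i m 1 \<alpha> u] i True by simp
    ultimately show ?thesis
      using IH basisW_downward_closed[OF M] by simp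
  next
    case False
    then have "(\<lambda>s. derA p m n t i (?M s)) = (\<lambda>r a. 0)"
      by (simp add: fun_eq_iff monW_def derA_monA_Y0[OF i a] derA_zero)
    then show ?thesis by (simp add: D_zero)
  qed
  moreover have "D (\<lambda>s. derA p m n t i (?M s)) = (\<lambda>s. derA p m n t i (D ?M s))"
    using D_brW_commute_low_degree[OF del _ M'] q_gt_1 brW_partial[OF i M'] brW_partial[OF i D_Wev[OF M']]
    by simp
  moreover have "(\<gamma>, w) \<in> basisA p m n t"
    using D_Wev[OF M'] nz unfolding Wev_def by blast
  then have "derA p m n t i (D ?M s) (\<gamma>(i := \<gamma> i - 1), w) = D ?M s (\<gamma>, w)"
    using i \<open>\<gamma> i \<noteq> 0\<close> basisA_downward_closed[of \<gamma> w p m n t "\<gamma>(i := \<gamma> i - 1)" w]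
    by (simp add: derA_def fun_upd_idem)
  ultimately show False using nz by (metis fun_eq_iff)
qed

lemma D_monW_vanishes_by_raising:
  assumes M: "(r, (\<alpha>, u)) \<in> basisW p m n t"
    and IH: "\<And>r' a'. total_deg m a' < total_deg m (\<alpha>, u) \<Longrightarrow> (r', a') \<in> basisW p m n t \<Longrightarrow>
      D (monW r' a') = (\<lambda>r a. 0)"
    and l: "l \<in> Y0 m" and b: "2 \<le> b" "b < q" "b \<le> \<alpha> l"
    and c: "bracket_coeff r \<alpha> l b \<noteq> (0::'a)"
  shows "D (monW r (\<alpha>, u)) = (\<lambda>r a. 0)"
proof -
  let ?M = "monW r (\<alpha>, u) :: 'a wel"
  let ?E = "monW l (single_exp l b, {}) :: 'a wel"
  let ?N = "monW r (\<alpha>(l := \<alpha> l - (b - 1)), u) :: 'a wel"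
  have M': "?M \<in> Wev p m n t" by (rule monW_in_Wev[OF M])
  have a: "(\<alpha>, u) \<in> basisA p m n t" and r: "r \<in> Y m n" using M by (auto simp: basisW_def)
  have "(l, (single_exp l b, {})) \<in> basisW p m n t"
    using l b(3) Y0_subset_Y basisA_downward_closed[OF a, of "single_exp l b" "{}"]
    by (auto simp: basisW_def tau_Y0 single_exp_def)
  moreover have "total_deg m (single_exp l b, {}) = b"
    unfolding total_deg_def by (subst sum_eq_single[OF finite_Y0 l]) (auto simp: single_exp_def)
  ultimately have E: "?E \<in> Wdeg p m n t (int b - 1)"
    using monW_in_Wdeg by fastforce
  have N: "(r, (\<alpha>(l := \<alpha> l - (b - 1)), u)) \<in> basisW p m n t"
    by (rule basisW_downward_closed[OF M]) simp
  have "b - 1 \<le> \<alpha> l" using b by simp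
  from total_deg_lower[where \<alpha> = \<alpha> and u = u, OF l this] b
  have "total_deg m (\<alpha>(l := \<alpha> l - (b - 1)), u) < total_deg m (\<alpha>, u)" by linarith
  then have "D ?N = (\<lambda>r a. 0)" using IH N by blast
  then have "D (brW p m n t ?E ?N) = (\<lambda>r a. 0)"
    using D_brW_commute_low_degree[OF E _ monW_in_Wev[OF N]] b(2) by (simp add: brW_zero_right)
  moreover have "brW p m n t ?E ?N = (\<lambda>s x. bracket_coeff r \<alpha> l b * ?M s x)"
    using brW_raising[OF l a _ b(3) r] b(1) by simp
  ultimately have "(\<lambda>s x. bracket_coeff r \<alpha> l b * D ?M s x) = (\<lambda>r a. 0)"
    using D_smult[OF M'] by simp
  then show ?thesis using c by (simp add: fun_eq_iff)
qed

lemma D_monW_odd_count: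
  assumes M: "(r, (\<alpha>, u)) \<in> basisW p m n t" and nz: "D (monW r (\<alpha>, u)) s (\<gamma>, w) \<noteq> 0"
  shows "card u + (if s \<in> Y1 m n then 1 else 0) = card w + (if r \<in> Y1 m n then 1 else 0)"
proof -
  have u: "u \<subseteq> Y1 m n" using M by (auto simp: basisW_def basisA_def)
  have "(\<gamma>, w) \<in> basisA p m n t"
    using D_Wev[OF monW_in_Wev[OF M]] nz unfolding Wev_def by blast
  then have w: "w \<subseteq> Y1 m n" by (simp add: basisA_def)
  have count: "(if k \<in> u then 1 else 0) + (if s = k then 1 else 0)
      = (if k \<in> w then 1 else 0) + (if r = k then 1 else (0::nat))" if k: "k \<in> Y1 m n" for k
  proof -
    have "weight m k r (\<alpha>, u) = (weight m k s (\<gamma>, w) :: 'a)"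
      using D_monW_weight[OF M _ nz] k Y1_subset_Y by blast
    then have "of_nat ((if k \<in> u then 1 else 0) + (if s = k then 1 else 0)) =
        (of_nat ((if k \<in> w then 1 else 0) + (if r = k then 1 else 0)) :: 'a)"
      using Y1_not_Y0[OF k] by (simp add: weight_def algebra_simps split: if_splits)
    then have "[(if k \<in> u then 1 else 0) + (if s = k then 1 else 0)
        = (if k \<in> w then 1 else 0) + (if r = k then 1 else (0::nat))] (mod CHAR('a))"
      by (simp only: of_nat_eq_iff_cong_CHAR)
    then show ?thesis
      by (rule cong_less_modulus_unique_nat) (use p_gt_3 char in auto)
  qed
  have "(\<Sum>k\<in>Y1 m n. (if k \<in> u then 1 else 0) + (if s = k then 1 else 0))
      = (\<Sum>k\<in>Y1 m n. (if k \<in> w then 1 else 0) + (if r = k then 1 else (0::nat)))"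
    using count by (rule sum.cong[OF refl])
  then show ?thesis
    by (simp add: sum.distrib sum_indicator_eq_card[OF finite_Y1 u] sum_indicator_eq_card[OF finite_Y1 w]
        finite_Y1 eq_commute[of s] eq_commute[of r])
qed

lemma D_monW_support_constraints:
  assumes M: "(r, (\<alpha>, u)) \<in> basisW p m n t"
    and IH: "\<And>r' a'. total_deg m a' < total_deg m (\<alpha>, u) \<Longrightarrow> (r', a') \<in> basisW p m n t \<Longrightarrow>
      D (monW r' a') = (\<lambda>r a. 0)"
    and nz: "D (monW r (\<alpha>, u)) s (\<gamma>, w) \<noteq> 0"
  shows "sum \<alpha> (Y0 m) + (if s \<in> Y0 m then 1 else 0) = q + (if r \<in> Y0 m then 1 else 0)"
    and "\<forall>k\<in>Y0 m. of_nat (\<alpha> k) + (if s = k then 1 else 0) = (if r = k then 1 else (0::'a))"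
proof -
  have \<gamma>: "\<gamma> i = 0" if "i \<in> Y0 m" for i
    by (rule D_monW_support_no_even_vars[OF M IH nz that])
  have "D (monW r (\<alpha>, u)) \<in> Wdeg p m n t (int (total_deg m (\<alpha>, u)) - 1 - int q)"
    by (rule D_Wdeg[OF monW_in_Wdeg[OF M]])
  then have s: "s \<in> Y m n" and "int (\<Sum>j\<in>Y0 m. \<gamma> j) + int (card w) - 1 = int (total_deg m (\<alpha>, u)) - 1 - int q"
    using nz unfolding Wdeg_def Wev_def by auto
  then have "int (card w) + int q = int (sum \<alpha> (Y0 m)) + int (card u)"
    using \<gamma> by (simp add: total_deg_def del: of_nat_sum)
  then have "card w + q = sum \<alpha> (Y0 m) + card u" by linarith
  moreover have r: "r \<in> Y m n" using M by (simp add: basisW_def)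
  ultimately show "sum \<alpha> (Y0 m) + (if s \<in> Y0 m then 1 else 0) = q + (if r \<in> Y0 m then 1 else 0)"
    using D_monW_odd_count[OF M nz] Y_not_Y0_iff[OF r] Y_not_Y0_iff[OF s] by (auto split: if_splits)
  show "\<forall>k\<in>Y0 m. of_nat (\<alpha> k) + (if s = k then 1 else 0) = (if r = k then 1 else (0::'a))"
  proof
    fix k assume k: "k \<in> Y0 m"
    have "weight m k r (\<alpha>, u) = (weight m k s (\<gamma>, w) :: 'a)"
      using D_monW_weight[OF M _ nz] k Y0_subset_Y by blast
    then show "of_nat (\<alpha> k) + (if s = k then 1 else 0) = (if r = k then 1 else (0::'a))"
      using k \<gamma>[OF k] by (auto simp: weight_def algebra_simps split: if_splits)
  qed
qed

lemma D_monW_eq_zero: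
  assumes "(r, a) \<in> basisW p m n t"
  shows "D (monW r a) = (\<lambda>r a. 0)"
  using assms
proof (induction "total_deg m a" arbitrary: r a rule: less_induct)
  case less
  obtain \<alpha> u where a: "a = (\<alpha>, u)" by (cases a)
  show ?case
  proof (rule ccontr)
    assume "D (monW r a) \<noteq> (\<lambda>r a. 0)"
    then obtain s x where "D (monW r a) s x \<noteq> 0" by (auto simp: fun_eq_iff)
    moreover obtain \<gamma> w where "x = (\<gamma>, w)" by (cases x)
    ultimately have nz: "D (monW r (\<alpha>, u)) s (\<gamma>, w) \<noteq> 0" using a by simp
    have M: "(r, (\<alpha>, u)) \<in> basisW p m n t" using less.prems a by simp
    have IH: "\<And>r' a'. total_deg m a' < total_deg m (\<alpha>, u) \<Longrightarrow> (r', a') \<in> basisW p m n t \<Longrightarrow>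
        D (monW r' a') = (\<lambda>r a. 0)"
      using less.hyps a by blast
    have char_p: "prime CHAR('a)" "3 < CHAR('a)" "\<nexists>k. q = CHAR('a) ^ k"
      using prime p_gt_3 not_power char by simp_all
    obtain l b where lb: "l \<in> Y0 m" "2 \<le> b" "b < q" "b \<le> \<alpha> l" "bracket_coeff r \<alpha> l b \<noteq> (0::'a)"
      using exists_raising_exp[OF char_p(1,2) q_gt_1 char_p(3) finite_Y0 D_monW_support_constraints[OF M IH nz]]
      by blast
    have "D (monW r (\<alpha>, u)) = (\<lambda>r a. 0)"
      by (rule D_monW_vanishes_by_raising[OF M IH lb])
    then show False using nz by simp
  qed
qed

lemma D_eq_zero_finite_support:
  assumes "finite F" "X \<in> Wev p m n t" "{(r, a). X r a \<noteq> 0} \<subseteq> F"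
  shows "D X = (\<lambda>r a. 0)"
  using assms
proof (induction F arbitrary: X rule: finite_induct)
  case empty
  then have "X = (\<lambda>r a. 0)" by (auto simp: fun_eq_iff)
  then show ?case by (simp add: D_zero)
next
  case (insert x F)
  obtain r0 a0 where x: "x = (r0, a0)" by (cases x)
  define X' where "X' = (\<lambda>r a. if (r, a) = (r0, a0) then 0 else X r a)"
  have X': "X' \<in> Wev p m n t" using insert.prems(1) by (auto simp: X'_def Wev_def)
  have DX': "D X' = (\<lambda>r a. 0)"
    using insert.prems(2) x by (intro insert.IH[OF X']) (auto simp: X'_def)
  show ?case
  proof (cases "X r0 a0 = 0")
    case True
    then have "X = X'" by (auto simp: X'_def fun_eq_iff)
    then show ?thesis using DX' by simp
  next
    case False
    then have "(r0, a0) \<in> basisW p m n t"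
      using insert.prems(1) unfolding Wev_def basisW_def by blast
    then have M: "monW r0 a0 \<in> Wev p m n t" and DM: "D (monW r0 a0) = (\<lambda>r a. 0)"
      by (rule monW_in_Wev, rule D_monW_eq_zero)
    have cM: "(\<lambda>r a. X r0 a0 * monW r0 a0 r a) \<in> Wev p m n t"
      using M by (auto simp: Wev_def)
    have "X = (\<lambda>r a. X' r a + X r0 a0 * monW r0 a0 r a)"
      by (auto simp: fun_eq_iff X'_def monW_def monA_def)
    then show ?thesis
      using D_add[OF X' cM] D_smult[OF M] DX' DM by simp
  qed
qed

lemma D_eq_zero: "X \<in> Wev p m n t \<Longrightarrow> D X = (\<lambda>r a. 0)"
  by (rule D_eq_zero_finite_support[of "Y m n \<times> basisA p m n t"])
    (auto simp: finite_Y finite_basisA Wev_def)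

end

theorem proposition3p2p9:
  fixes p m n q :: nat and t :: "nat \<Rightarrow> nat"
    and D :: "('a::field) wel \<Rightarrow> 'a wel"
  assumes "prime p" and "p > 3" and "CHAR('a) = p"
    and "m \<ge> 3" and "n \<ge> 3"
    and "\<forall>i\<in>{1..m}. t i > 0"
    and "q > 1" and "\<not> (\<exists>k. q = p ^ k)"
    and "D \<in> Der_deg p m n t (- int q)"
  shows "\<forall>X\<in>Wev p m n t. D X = (\<lambda>r a. 0)"
proof -
  interpret negative_degree_derivation p m n t q D
    by unfold_locales (use assms in auto)
  show ?thesis using D_eq_zero by blast
qed

end
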